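(* Let $G$ be a finite, simple, connected graph of order $n\ge 3$. Then $res_{wt}(G)=n$ if and only if $G$ contains a twin (i.e. some vertex of $G$ is a twin).
   Context: $d(x,y)$ is the shortest-path distance and $N(x)$ the set of neighbors of $x$. A set $W\subseteq V(G)$ is a resolving set if for every two distinct vertices $y,z$ there is $x\in W$ with $d(y,x)\ne d(z,x)$. A set $W$ is a weak total resolving set (WTR-set) if $W$ is resolving and, for every $w\in W$ and every $x\in V(G)\setminus W$, there is $w'\in W\setminus\{w\}$ with $d(x,w')\ne d(w,w')$. The weak total resolving number $res_{wt}(G)$ is the minimum positive integer $r$ such that every set of $r$ vertices of $G$ is a WTR-set for $G$. Two distinct vertices $u,v$ are twins if $N(u)\setminus\{v\}=N(v)\setminus\{u\}$; a vertex $u$ is a twin if there exists $v\ne u$ such that $u,v$ are twins. *)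

theory Defs
  imports Main
begin

definition simple_graph :: "'a set \<Rightarrow> ('a \<Rightarrow> 'a \<Rightarrow> bool) \<Rightarrow> bool" where
  "simple_graph V E \<longleftrightarrow> finite V \<and> (\<forall>x y. E x y \<longrightarrow> x \<in> V \<and> y \<in> V)
     \<and> (\<forall>x y. E x y \<longrightarrow> E y x) \<and> (\<forall>x. \<not> E x x)"

definition edge_rel :: "('a \<Rightarrow> 'a \<Rightarrow> bool) \<Rightarrow> ('a \<times> 'a) set" where
  "edge_rel E = {(x, y). E x y}"

definition connected_graph :: "'a set \<Rightarrow> ('a \<Rightarrow> 'a \<Rightarrow> bool) \<Rightarrow> bool" where
  "connected_graph V E \<longleftrightarrow> (\<forall>x\<in>V. \<forall>y\<in>V. \<exists>k. (x, y) \<in> edge_rel E ^^ k)"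

definition gdist :: "('a \<Rightarrow> 'a \<Rightarrow> bool) \<Rightarrow> 'a \<Rightarrow> 'a \<Rightarrow> nat" where
  "gdist E x y = (LEAST k. (x, y) \<in> edge_rel E ^^ k)"

definition nbhd :: "('a \<Rightarrow> 'a \<Rightarrow> bool) \<Rightarrow> 'a \<Rightarrow> 'a set" where
  "nbhd E x = {y. E x y}"

definition twins :: "('a \<Rightarrow> 'a \<Rightarrow> bool) \<Rightarrow> 'a \<Rightarrow> 'a \<Rightarrow> bool" where
  "twins E u v \<longleftrightarrow> u \<noteq> v \<and> nbhd E u - {v} = nbhd E v - {u}"

definition is_twin :: "'a set \<Rightarrow> ('a \<Rightarrow> 'a \<Rightarrow> bool) \<Rightarrow> 'a \<Rightarrow> bool" where
  "is_twin V E u \<longleftrightarrow> (\<exists>v\<in>V. twins E u v)"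

definition resolving_set :: "'a set \<Rightarrow> ('a \<Rightarrow> 'a \<Rightarrow> bool) \<Rightarrow> 'a set \<Rightarrow> bool" where
  "resolving_set V E W \<longleftrightarrow> W \<subseteq> V \<and>
     (\<forall>y\<in>V. \<forall>z\<in>V. y \<noteq> z \<longrightarrow> (\<exists>x\<in>W. gdist E y x \<noteq> gdist E z x))"

definition wtr_set :: "'a set \<Rightarrow> ('a \<Rightarrow> 'a \<Rightarrow> bool) \<Rightarrow> 'a set \<Rightarrow> bool" where
  "wtr_set V E W \<longleftrightarrow> resolving_set V E W \<and>
     (\<forall>w\<in>W. \<forall>x\<in>V - W. \<exists>w'\<in>W - {w}. gdist E x w' \<noteq> gdist E w w')"

definition res_wt :: "'a set \<Rightarrow> ('a \<Rightarrow> 'a \<Rightarrow> bool) \<Rightarrow> nat" where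
  "res_wt V E = (LEAST r. r > 0 \<and> (\<forall>W. W \<subseteq> V \<and> card W = r \<longrightarrow> wtr_set V E W))"

end

theory Submission
  imports Defs
begin

text \<open>Twins u, v are at equal distance from every third vertex. Hence no set avoiding both of
them is resolving, and V - {u} violates the WTR condition for w = v, x = u; so with a twin every
set of fewer than n vertices fails, and res_wt = n. Without twins, the sets of size n - 1 are the
sets V - {u}: they resolve, since each vertex is separated from any other by itself, and for
w \<noteq> u a vertex t adjacent to exactly one of u, w lies in V - {u, w} and is at distance 1 from
exactly one of them, so res_wt \<le> n - 1.\<close>

lemma gdist_self: "gdist E x x = 0"
  unfolding gdist_def by (rule Least_eq_0) simp

lemma relpow_gdist:
  assumes "connected_graph V E" "x \<in> V" "y \<in> V"
  shows "(x, y) \<in> edge_rel E ^^ gdist E x y"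
proof -
  obtain k where "(x, y) \<in> edge_rel E ^^ k"
    using assms unfolding connected_graph_def by blast
  then show ?thesis unfolding gdist_def by (rule LeastI)
qed

lemma gdist_le_walk: "(x, y) \<in> edge_rel E ^^ k \<Longrightarrow> gdist E x y \<le> k"
  unfolding gdist_def by (rule Least_le)

lemma gdist_eq_0_iff:
  assumes "connected_graph V E" "x \<in> V" "y \<in> V"
  shows "gdist E x y = 0 \<longleftrightarrow> x = y"
proof
  assume "gdist E x y = 0"
  then show "x = y" using relpow_gdist[OF assms] by simp
qed (simp add: gdist_self)

lemma gdist_eq_1_iff:
  assumes "simple_graph V E" "connected_graph V E" "x \<in> V" "y \<in> V"
  shows "gdist E x y = 1 \<longleftrightarrow> E x y"
proof
  assume "gdist E x y = 1"
  then show "E x y" using relpow_gdist[OF assms(2-4)] by (simp add: edge_rel_def)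
next
  assume "E x y"
  then have "gdist E x y \<le> 1" by (intro gdist_le_walk) (simp add: edge_rel_def)
  moreover have "x \<noteq> y" using \<open>E x y\<close> assms(1) unfolding simple_graph_def by blast
  ultimately show "gdist E x y = 1" using gdist_eq_0_iff[OF assms(2-4)] by linarith
qed

lemma twins_sym: "twins E u v \<Longrightarrow> twins E v u"
  unfolding twins_def by auto

text \<open>The first step of a walk from u to a third vertex can be redirected to start at v.\<close>

lemma twins_walk:
  assumes "twins E u v" "x \<noteq> u" "(u, x) \<in> edge_rel E ^^ k"
  shows "\<exists>k'\<le>k. (v, x) \<in> edge_rel E ^^ k'"
proof (cases k)
  case 0
  then show ?thesis using assms by simp
next
  case (Suc m)
  then obtain p where p: "(u, p) \<in> edge_rel E" "(p, x) \<in> edge_rel E ^^ m"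
    using assms(3) relpow_Suc_D2 by metis
  show ?thesis
  proof (cases "p = v")
    case True
    then show ?thesis using p Suc by (intro exI[of _ m]) auto
  next
    case False
    then have "p \<in> nbhd E v"
      using p(1) assms(1) unfolding twins_def nbhd_def edge_rel_def by blast
    then have "(v, x) \<in> edge_rel E ^^ Suc m"
      using p(2) by (intro relpow_Suc_I2) (simp_all add: nbhd_def edge_rel_def)
    then show ?thesis using Suc by blast
  qed
qed

lemma twins_gdist_le:
  assumes "connected_graph V E" "u \<in> V" "x \<in> V" "twins E u v" "x \<noteq> u"
  shows "gdist E v x \<le> gdist E u x"
  using twins_walk[OF assms(4,5) relpow_gdist[OF assms(1-3)]]
  by (meson gdist_le_walk le_trans)

lemma twins_gdist_eq:
  assumes "connected_graph V E" "u \<in> V" "v \<in> V" "x \<in> V" "twins E u v" "x \<noteq> u" "x \<noteq> v"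
  shows "gdist E u x = gdist E v x"
  using twins_gdist_le[OF assms(1,3,4) twins_sym[OF assms(5)] assms(7)]
    twins_gdist_le[OF assms(1,2,4,5,6)]
  by (rule antisym)

lemma resolving_set_mono:
  "resolving_set V E W \<Longrightarrow> W \<subseteq> W' \<Longrightarrow> W' \<subseteq> V \<Longrightarrow> resolving_set V E W'"
  unfolding resolving_set_def by blast

lemma resolving_set_Diff_singleton:
  assumes "connected_graph V E"
  shows "resolving_set V E (V - {u})"
  unfolding resolving_set_def
proof (intro conjI ballI impI)
  fix y z assume yz: "y \<in> V" "z \<in> V" "y \<noteq> z"
  have "gdist E y z \<noteq> gdist E z z" "gdist E y y \<noteq> gdist E z y"
    using yz gdist_eq_0_iff[OF assms] by (auto simp: gdist_self)
  then show "\<exists>x\<in>V - {u}. gdist E y x \<noteq> gdist E z x"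
    using yz by (cases "y = u") auto
qed auto

lemma wtr_set_self:
  assumes "connected_graph V E" "u \<in> V"
  shows "wtr_set V E V"
  using resolving_set_mono[OF resolving_set_Diff_singleton[OF assms(1), of u]]
  unfolding wtr_set_def by blast

lemma wtr_set_Diff_singleton:
  assumes G: "simple_graph V E" "connected_graph V E"
    and u: "u \<in> V" and no_twin: "\<not> is_twin V E u"
  shows "wtr_set V E (V - {u})"
  unfolding wtr_set_def
proof (intro conjI ballI resolving_set_Diff_singleton[OF G(2)])
  fix w x assume w: "w \<in> V - {u}" and "x \<in> V - (V - {u})"
  then have "x = u" by blast
  have "\<not> twins E u w" using no_twin w unfolding is_twin_def by blast
  then have "nbhd E u - {w} \<noteq> nbhd E w - {u}" using w unfolding twins_def by blast
  then obtain t where "t \<in> nbhd E u - {w} \<longleftrightarrow> t \<notin> nbhd E w - {u}" by blast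
  then have t: "t \<noteq> u" "t \<noteq> w" "E u t \<noteq> E w t"
    using G(1) unfolding simple_graph_def nbhd_def by auto
  have "t \<in> V" using t(3) G(1) unfolding simple_graph_def by blast
  have "gdist E u t \<noteq> gdist E w t"
    using t(3) gdist_eq_1_iff[OF G u \<open>t \<in> V\<close>] gdist_eq_1_iff[OF G _ \<open>t \<in> V\<close>, of w] w
    by auto
  then show "\<exists>w'\<in>V - {u} - {w}. gdist E x w' \<noteq> gdist E w w'"
    using t \<open>t \<in> V\<close> \<open>x = u\<close> by blast
qed

lemma not_resolving_set_avoiding_twins:
  assumes "connected_graph V E" "u \<in> V" "v \<in> V" "twins E u v" "W \<inter> {u, v} = {}"
  shows "\<not> resolving_set V E W"
proof
  assume "resolving_set V E W"
  moreover have "u \<noteq> v" using assms(4) unfolding twins_def by blast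
  ultimately obtain x where "x \<in> W" "x \<in> V" "gdist E u x \<noteq> gdist E v x"
    using assms(2,3) unfolding resolving_set_def by blast
  then show False using twins_gdist_eq[OF assms(1-3) _ assms(4)] assms(5) by blast
qed

lemma not_wtr_set_Diff_twin:
  assumes "connected_graph V E" "u \<in> V" "v \<in> V" "twins E u v"
  shows "\<not> wtr_set V E (V - {u})"
proof
  assume "wtr_set V E (V - {u})"
  moreover have "v \<in> V - {u}" using assms(3,4) unfolding twins_def by blast
  ultimately obtain w' where "w' \<in> V - {u} - {v}" "gdist E u w' \<noteq> gdist E v w'"
    using assms(2) unfolding wtr_set_def by blast
  then show False using twins_gdist_eq[OF assms(1-3) _ assms(4)] by blast
qed

lemma exists_not_wtr_set_of_card:
  assumes "finite V" "connected_graph V E" "u \<in> V" "v \<in> V" "twins E u v" "r < card V"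
  shows "\<exists>W\<subseteq>V. card W = r \<and> \<not> wtr_set V E W"
proof (cases "r + 1 < card V")
  case True
  have "u \<noteq> v" using assms(5) unfolding twins_def by blast
  have "card (V - {u, v}) = card V - card {u, v}"
    using assms(1,3,4) by (intro card_Diff_subset) (auto intro: finite_subset)
  also have "card {u, v} = 2" using \<open>u \<noteq> v\<close> by simp
  finally have "r \<le> card (V - {u, v})" using True by linarith
  then obtain W where "W \<subseteq> V - {u, v}" "card W = r" by (rule obtain_subset_with_card_n)
  moreover have "\<not> resolving_set V E W"
    using not_resolving_set_avoiding_twins[OF assms(2-5)] \<open>W \<subseteq> V - {u, v}\<close> by blast
  ultimately show ?thesis unfolding wtr_set_def by blast
next
  case False
  then have "card (V - {u}) = r" using assms(1,3,6) by simp
  then show ?thesis using not_wtr_set_Diff_twin[OF assms(2-5)] by blast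
qed

lemma res_wt_eq_card_iff:
  assumes "finite V" "V \<noteq> {}" "wtr_set V E V"
  shows "res_wt V E = card V \<longleftrightarrow>
    (\<forall>r. 0 < r \<and> r < card V \<longrightarrow> (\<exists>W\<subseteq>V. card W = r \<and> \<not> wtr_set V E W))"
proof -
  define P where "P r \<longleftrightarrow> 0 < r \<and> (\<forall>W. W \<subseteq> V \<and> card W = r \<longrightarrow> wtr_set V E W)" for r
  have "res_wt V E = Least P" unfolding res_wt_def P_def ..
  moreover have "P (card V)"
    using assms card_subset_eq unfolding P_def by (auto simp: card_gt_0_iff)
  then have "Least P = card V \<longleftrightarrow> (\<forall>r < card V. \<not> P r)"
  proof (intro iffI allI impI notI)
    fix r assume "Least P = card V" "r < card V" "P r"
    then show False using Least_le[of P r] by simp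
  next
    assume "\<forall>r < card V. \<not> P r"
    then show "Least P = card V"
      using \<open>P (card V)\<close> by (intro Least_equality) (auto simp: not_less[symmetric])
  qed
  moreover have "\<not> P r \<longleftrightarrow> (0 < r \<longrightarrow> (\<exists>W\<subseteq>V. card W = r \<and> \<not> wtr_set V E W))" for r
    unfolding P_def by blast
  ultimately show ?thesis by auto
qed

lemma obtain_Diff_singleton_of_card:
  assumes "finite V" "W \<subseteq> V" "card W = card V - 1" "V \<noteq> {}"
  obtains u where "u \<in> V" "W = V - {u}"
proof -
  have "card (V - W) = card V - card W"
    using assms(1,2) by (intro card_Diff_subset) (auto intro: finite_subset)
  then have "card (V - W) = 1"
    using assms(1,3,4) by (simp add: card_gt_0_iff Suc_leI)
  then obtain u where "V - W = {u}" by (rule card_1_singletonE)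
  then show ?thesis using that assms(2) by blast
qed

theorem theorem5:
  fixes V :: "'a set" and E :: "'a \<Rightarrow> 'a \<Rightarrow> bool"
  assumes "simple_graph V E" and "connected_graph V E" and "card V \<ge> 3"
  shows "res_wt V E = card V \<longleftrightarrow> (\<exists>u\<in>V. is_twin V E u)"
proof -
  have fin: "finite V" using assms(1) unfolding simple_graph_def by blast
  obtain v where "v \<in> V" using assms(3) by fastforce
  then have ne: "V \<noteq> {}" by blast
  note res_wt_iff = res_wt_eq_card_iff[OF fin ne wtr_set_self[OF assms(2) \<open>v \<in> V\<close>]]
  show ?thesis
  proof
    assume "res_wt V E = card V"
    moreover have "0 < card V - 1" "card V - 1 < card V" using assms(3) by simp_all
    ultimately obtain W where W: "W \<subseteq> V" "card W = card V - 1" "\<not> wtr_set V E W"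
      using res_wt_iff by blast
    then obtain u where "u \<in> V" "W = V - {u}"
      using obtain_Diff_singleton_of_card fin ne by metis
    then show "\<exists>u\<in>V. is_twin V E u"
      using W(3) wtr_set_Diff_singleton[OF assms(1,2)] by blast
  next
    assume "\<exists>u\<in>V. is_twin V E u"
    then obtain u w where "u \<in> V" "w \<in> V" "twins E u w" unfolding is_twin_def by blast
    then show "res_wt V E = card V"
      using res_wt_iff exists_not_wtr_set_of_card[OF fin assms(2)] by blast
  qed
qed

end
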